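(* Let $n\geq 2$. If $\prec_1,\ldots,\prec_n$ are linear orders on $D_n$ which realize the product order $<$ on $D_n$, then there are linear orders $\prec_1^*,\ldots,\prec_n^*$ on $\mathbb{Q}^n$ extending $\prec_1,\ldots,\prec_n$ respectively which realize the product order on $\mathbb{Q}^n$.
   Context: Fix $n\geq 2$ and a set $D_n\subseteq\mathbb{Q}^n$ which is dense in $\mathbb{Q}^n$ (product topology) and such that no two distinct points of $D_n$ share a common coordinate. The product order: $\mathbf{a}<\mathbf{b}$ iff $a_i\leq b_i$ for all $i$ and $\mathbf{a}\neq\mathbf{b}$. Linear orders $\prec_1,\ldots,\prec_n$ on a set realize a partial order $<$ on it if $<\;=\;\prec_1\cap\cdots\cap\prec_n$. *)

theory Defs
  imports "HOL-Analysis.Analysis"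
begin

definition prod_less :: "rat ^ 'n \<Rightarrow> rat ^ 'n \<Rightarrow> bool" where
  "prod_less a b \<longleftrightarrow> (\<forall>i. a $ i \<le> b $ i) \<and> a \<noteq> b"

definition prod_order_on :: "(rat ^ 'n) set \<Rightarrow> (rat ^ 'n) rel" where
  "prod_order_on A = {(a, b). a \<in> A \<and> b \<in> A \<and> prod_less a b}"

definition lin_order_on :: "'a set \<Rightarrow> 'a rel \<Rightarrow> bool" where
  "lin_order_on A r \<longleftrightarrow> r \<subseteq> A \<times> A \<and> strict_linear_order_on A r"

definition realizes :: "('i \<Rightarrow> 'a rel) \<Rightarrow> 'a rel \<Rightarrow> bool" where
  "realizes R P \<longleftrightarrow> P = (\<Inter>i. R i)"

text \<open>Density in rat^n w.r.t. the product topology (basis: products of open intervals).\<close>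
definition dense_in_Qn :: "(rat ^ 'n) set \<Rightarrow> bool" where
  "dense_in_Qn D \<longleftrightarrow> (\<forall>a b. (\<forall>i. a $ i < b $ i) \<longrightarrow> (\<exists>d\<in>D. \<forall>i. a $ i < d $ i \<and> d $ i < b $ i))"

definition no_common_coord :: "(rat ^ 'n) set \<Rightarrow> bool" where
  "no_common_coord D \<longleftrightarrow> (\<forall>d\<in>D. \<forall>e\<in>D. d \<noteq> e \<longrightarrow> (\<forall>i. d $ i \<noteq> e $ i))"

end

theory Submission
  imports Defs
begin

(*
  Call (p, q) critical for coordinate j if p lies below q in coordinate j and above it
  in every other coordinate. Some R i contains (p, q), because (q, p) is not in the
  product order. Two pairs (p, q), (p', q') with q below p' and q' below p in every
  coordinate cannot lie in the same R i, as the product order would close a cycle.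
  Density provides n - 1 such mutually crossing critical pairs, one for each other
  coordinate, that also cross two given critical pairs for j whose boxes overlap; by
  pigeonhole those two pairs then lie in the same R i. Linking arbitrary d, e of D with
  d_j < e_j to such a pair shows that this R i compares the j-th coordinate on all of D.
  Since distinct points of D differ in every coordinate, every R i is the order of a
  single coordinate c i, with c a bijection; the extensions to Q^n order by that
  coordinate first and break ties lexicographically.
*)

definition coords_less :: "rat ^ 'n \<Rightarrow> rat ^ 'n \<Rightarrow> bool" where
  "coords_less x y \<longleftrightarrow> (\<forall>k. x $ k < y $ k)"

lemma coords_less_imp_prod_less: "coords_less x y \<Longrightarrow> prod_less x y"
  unfolding coords_less_def prod_less_def by (metis less_imp_le order.irrefl)

definition coord_less_on :: "(rat ^ 'n) set \<Rightarrow> 'n \<Rightarrow> (rat ^ 'n) rel" where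
  "coord_less_on A j = {(x, y). x \<in> A \<and> y \<in> A \<and> x $ j < y $ j}"

definition crossing :: "(rat ^ 'n) \<times> (rat ^ 'n) \<Rightarrow> (rat ^ 'n) \<times> (rat ^ 'n) \<Rightarrow> bool" where
  "crossing x y \<longleftrightarrow> coords_less (snd x) (fst y) \<and> coords_less (snd y) (fst x)"

definition critical :: "'n \<Rightarrow> rat ^ 'n \<Rightarrow> rat ^ 'n \<Rightarrow> bool" where
  "critical j p q \<longleftrightarrow> p $ j < q $ j \<and> (\<forall>k. k \<noteq> j \<longrightarrow> q $ k < p $ k)"

locale realizer =
  fixes D :: "(rat ^ 'n::finite) set" and R :: "'n \<Rightarrow> (rat ^ 'n) rel"
  assumes lin_order: "\<forall>i. lin_order_on D (R i)"
    and realizes: "realizes R (prod_order_on D)"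
begin

lemma R_subset: "(x, y) \<in> R i \<Longrightarrow> x \<in> D \<and> y \<in> D"
  using lin_order unfolding lin_order_on_def by blast

lemma R_trans: "(x, y) \<in> R i \<Longrightarrow> (y, z) \<in> R i \<Longrightarrow> (x, z) \<in> R i"
  using lin_order unfolding lin_order_on_def strict_linear_order_on_def trans_def by blast

lemma R_irrefl: "(x, x) \<notin> R i"
  using lin_order unfolding lin_order_on_def strict_linear_order_on_def irrefl_on_def by blast

lemma R_total: "x \<in> D \<Longrightarrow> y \<in> D \<Longrightarrow> x \<noteq> y \<Longrightarrow> (x, y) \<in> R i \<or> (y, x) \<in> R i"
  using lin_order unfolding lin_order_on_def strict_linear_order_on_def total_on_def by blast

lemma R_if_coords_less: "x \<in> D \<Longrightarrow> y \<in> D \<Longrightarrow> coords_less x y \<Longrightarrow> (x, y) \<in> R i"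
  using realizes coords_less_imp_prod_less unfolding realizes_def prod_order_on_def by blast

lemma ex_order_containing:
  assumes "x \<in> D" "y \<in> D" "x $ j < y $ j"
  shows "\<exists>i. (x, y) \<in> R i"
proof -
  have "(y, x) \<notin> prod_order_on D"
    using assms unfolding prod_order_on_def prod_less_def by (auto simp: not_le)
  then obtain i where "(y, x) \<notin> R i" using realizes unfolding realizes_def by blast
  moreover have "x \<noteq> y" using assms by auto
  ultimately show ?thesis using R_total assms by blast
qed

lemma not_crossing_in_same_order:
  assumes "crossing x y" "x \<in> R i" "y \<in> R i"
  shows False
proof -
  obtain p q p' q' where xy: "x = (p, q)" "y = (p', q')" by (metis surj_pair)
  have D: "p \<in> D" "q \<in> D" "p' \<in> D" "q' \<in> D" using assms(2,3) xy R_subset by auto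
  have "coords_less q p'" "coords_less q' p" using assms(1) xy unfolding crossing_def by auto
  then have "(q, p') \<in> R i" "(q', p) \<in> R i" using D R_if_coords_less by auto
  then have "(p, p) \<in> R i" using assms(2,3) xy R_trans by meson
  then show False using R_irrefl by blast
qed

text \<open>Each of the \<open>CARD('n) - 1\<close> family pairs needs an order of its own, which leaves
  a single order for both \<open>x\<close> and \<open>y\<close>.\<close>
lemma crossing_family_forces_same_order:
  fixes K :: "'k set" and P :: "'k \<Rightarrow> (rat ^ 'n) \<times> (rat ^ 'n)"
  assumes "finite K" "card K + 1 = CARD('n)"
    and family_crossing: "\<And>k m. k \<in> K \<Longrightarrow> m \<in> K \<Longrightarrow> k \<noteq> m \<Longrightarrow> crossing (P k) (P m)"
    and family_ordered: "\<And>k. k \<in> K \<Longrightarrow> \<exists>i. P k \<in> R i"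
    and "\<And>k. k \<in> K \<Longrightarrow> crossing x (P k)" "\<And>k. k \<in> K \<Longrightarrow> crossing y (P k)"
    and "x \<in> R i" "y \<in> R i'"
  shows "i = i'"
proof (rule ccontr)
  assume "i \<noteq> i'"
  obtain \<rho> where \<rho>: "\<And>k. k \<in> K \<Longrightarrow> P k \<in> R (\<rho> k)" using family_ordered by metis
  have "inj_on \<rho> K"
  proof (rule inj_onI, rule ccontr)
    fix k m assume "k \<in> K" "m \<in> K" "\<rho> k = \<rho> m" "k \<noteq> m"
    then show False using \<rho> family_crossing not_crossing_in_same_order by metis
  qed
  then have "card (\<rho> ` K) + 1 = CARD('n)" using assms(2) by (simp add: card_image)
  moreover have "i \<notin> \<rho> ` K" "i' \<notin> \<rho> ` K"
    using assms(5-8) \<rho> not_crossing_in_same_order by blast+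
  ultimately have "card (insert i (insert i' (\<rho> ` K))) = CARD('n) + 1"
    using \<open>i \<noteq> i'\<close> \<open>finite K\<close> by simp
  moreover have "card (insert i (insert i' (\<rho> ` K))) \<le> CARD('n)"
    by (rule card_mono) auto
  ultimately show False by simp
qed

end

locale dense_realizer = realizer D R
  for D :: "(rat ^ 'n::finite) set" and R :: "'n \<Rightarrow> (rat ^ 'n) rel" +
  assumes dense: "dense_in_Qn D"
begin

lemma dense_point:
  assumes "\<And>k. l k < u k"
  obtains d where "d \<in> D" "\<And>k. l k < d $ k" "\<And>k. d $ k < u k"
  using dense assms unfolding dense_in_Qn_def by (metis vec_lambda_beta)

lemma critical_pair_between:
  assumes "l < u"
  obtains p q where "p \<in> D" "q \<in> D" "critical j p q" "l < p $ j" "q $ j < u"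
    "\<And>k. k \<noteq> j \<Longrightarrow> x $ k < p $ k" "\<And>k. k \<noteq> j \<Longrightarrow> q $ k < y $ k"
proof -
  define mid where "mid = (l + u) / 2"
  have mid: "l < mid" "mid < u" using assms by (simp_all add: mid_def field_simps)
  obtain p where p: "p \<in> D"
    "\<And>k. (if k = j then l else max (x $ k) (y $ k)) < p $ k"
    "\<And>k. p $ k < (if k = j then mid else max (x $ k) (y $ k) + 1)"
    by (rule dense_point[of "\<lambda>k. if k = j then l else max (x $ k) (y $ k)"
          "\<lambda>k. if k = j then mid else max (x $ k) (y $ k) + 1"]) (use mid in auto)
  obtain q where q: "q \<in> D"
    "\<And>k. (if k = j then mid else min (x $ k) (y $ k) - 1) < q $ k"
    "\<And>k. q $ k < (if k = j then u else min (x $ k) (y $ k))"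
    by (rule dense_point[of "\<lambda>k. if k = j then mid else min (x $ k) (y $ k) - 1"
          "\<lambda>k. if k = j then u else min (x $ k) (y $ k)"]) (use mid in auto)
  have off_j: "x $ k < p $ k" "q $ k < y $ k" "q $ k < p $ k" if "k \<noteq> j" for k
    using p(2)[of k] q(3)[of k] that by auto
  show thesis
  proof (rule that)
    show "critical j p q"
      unfolding critical_def using p(3)[of j] q(2)[of j] off_j(3) by simp
  qed (use p(1) p(2)[of j] q(1) q(3)[of j] off_j(1,2) in auto)
qed

lemma crossing_family:
  assumes "\<And>c. lo $ c \<le> hi $ c"
    and "\<And>k. k \<noteq> j \<Longrightarrow> lo $ k \<le> l $ k \<and> l $ k < u $ k \<and> u $ k \<le> hi $ k"
  obtains P where
    "\<And>k m. k \<noteq> j \<Longrightarrow> m \<noteq> j \<Longrightarrow> k \<noteq> m \<Longrightarrow> crossing (P k) (P m)"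
    "\<And>k. k \<noteq> j \<Longrightarrow> \<exists>i. P k \<in> R i"
    "\<And>k p q. k \<noteq> j \<Longrightarrow> \<forall>c. lo $ c \<le> p $ c \<and> q $ c \<le> hi $ c \<Longrightarrow>
       \<forall>c. c \<noteq> j \<longrightarrow> q $ c \<le> l $ c \<and> u $ c \<le> p $ c \<Longrightarrow> crossing (p, q) (P k)"
proof -
  have "\<exists>a b. a \<in> D \<and> b \<in> D \<and> critical k a b \<and> l $ k < a $ k \<and> b $ k < u $ k
      \<and> (\<forall>c. c \<noteq> k \<longrightarrow> hi $ c < a $ c \<and> b $ c < lo $ c)" if "k \<noteq> j" for k
  proof -
    have "l $ k < u $ k" using assms(2) that by blast
    then obtain a b where "a \<in> D" "b \<in> D" "critical k a b" "l $ k < a $ k" "b $ k < u $ k"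
      "\<And>c. c \<noteq> k \<Longrightarrow> hi $ c < a $ c" "\<And>c. c \<noteq> k \<Longrightarrow> b $ c < lo $ c"
      by (rule critical_pair_between[where j = k and x = hi and y = lo]) blast
    then show ?thesis by blast
  qed
  then obtain A B where AB: "\<And>k. k \<noteq> j \<Longrightarrow> A k \<in> D \<and> B k \<in> D \<and> critical k (A k) (B k)
      \<and> l $ k < A k $ k \<and> B k $ k < u $ k \<and> (\<forall>c. c \<noteq> k \<longrightarrow> hi $ c < A k $ c \<and> B k $ c < lo $ c)"
    by metis
  have cross: "B k $ c < A m $ c" if "k \<noteq> j" "m \<noteq> j" "k \<noteq> m" for k m c
  proof -
    have "B k $ k < hi $ k" "lo $ m < A m $ m" using AB that assms(2) by fastforce+
    then show ?thesis using AB[OF that(1)] AB[OF that(2)] assms(1)[of c] that(3)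
      by (cases "c = k"; cases "c = m") force+
  qed
  show thesis
  proof (rule that)
    show "crossing (A k, B k) (A m, B m)" if "k \<noteq> j" "m \<noteq> j" "k \<noteq> m" for k m
      unfolding crossing_def coords_less_def using cross that by simp
    show "\<exists>i. (A k, B k) \<in> R i" if "k \<noteq> j" for k
      using AB[OF that] ex_order_containing unfolding critical_def by blast
    show "crossing (p, q) (A k, B k)"
      if "k \<noteq> j" "\<forall>c. lo $ c \<le> p $ c \<and> q $ c \<le> hi $ c"
        "\<forall>c. c \<noteq> j \<longrightarrow> q $ c \<le> l $ c \<and> u $ c \<le> p $ c" for k p q
      unfolding crossing_def coords_less_def
      using AB[OF that(1)] that by (smt (verit) fst_conv snd_conv order.strict_trans1 order.strict_trans2)
  qed
qed

lemma critical_pairs_same_order: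
  assumes "critical j p q" "critical j p' q'" "p \<in> D" "q \<in> D" "p' \<in> D" "q' \<in> D"
    and overlap: "\<And>k. k \<noteq> j \<Longrightarrow> max (q $ k) (q' $ k) < min (p $ k) (p' $ k)"
    and "(p, q) \<in> R i" "(p', q') \<in> R i'"
  shows "i = i'"
proof -
  define lo where "lo = (\<chi> c. min (min (p $ c) (p' $ c)) (min (q $ c) (q' $ c)))"
  define hi where "hi = (\<chi> c. max (max (p $ c) (p' $ c)) (max (q $ c) (q' $ c)))"
  define l where "l = (\<chi> c. max (q $ c) (q' $ c))"
  define u where "u = (\<chi> c. min (p $ c) (p' $ c))"
  obtain P where family:
    "\<And>k m. k \<noteq> j \<Longrightarrow> m \<noteq> j \<Longrightarrow> k \<noteq> m \<Longrightarrow> crossing (P k) (P m)"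
    "\<And>k. k \<noteq> j \<Longrightarrow> \<exists>i. P k \<in> R i"
    "\<And>k p q. k \<noteq> j \<Longrightarrow> \<forall>c. lo $ c \<le> p $ c \<and> q $ c \<le> hi $ c \<Longrightarrow>
       \<forall>c. c \<noteq> j \<longrightarrow> q $ c \<le> l $ c \<and> u $ c \<le> p $ c \<Longrightarrow> crossing (p, q) (P k)"
    by (rule crossing_family[of lo hi j l u]) (use overlap in \<open>auto simp: lo_def hi_def l_def u_def\<close>)
  show ?thesis
  proof (rule crossing_family_forces_same_order[of "UNIV - {j}" P])
    show "card (UNIV - {j}) + 1 = CARD('n)"
      by (simp add: card_Diff_singleton Suc_leI)
    show "crossing (p, q) (P k)" "crossing (p', q') (P k)" if "k \<in> UNIV - {j}" for k
      using that by (auto intro!: family(3) simp: lo_def hi_def l_def u_def)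
  qed (use family assms(8,9) in auto)
qed

lemma critical_pair_determines_order:
  assumes "critical j p q" "p \<in> D" "q \<in> D" "(p, q) \<in> R i"
    and "d \<in> D" "e \<in> D" "d $ j < e $ j"
  shows "(d, e) \<in> R i"
proof -
  obtain a b where ab: "a \<in> D" "b \<in> D" "critical j a b" "d $ j < a $ j" "b $ j < e $ j"
    "\<And>k. k \<noteq> j \<Longrightarrow> max (d $ k) (q $ k) < a $ k" "\<And>k. k \<noteq> j \<Longrightarrow> b $ k < min (e $ k) (p $ k)"
    using critical_pair_between[where j = j and x = "\<chi> k. max (d $ k) (q $ k)"
        and y = "\<chi> k. min (e $ k) (p $ k)", OF \<open>d $ j < e $ j\<close>] by auto
  obtain i' where i': "(a, b) \<in> R i'"
    using ex_order_containing ab(1-3) unfolding critical_def by blast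
  have "i' = i"
  proof (rule critical_pairs_same_order[OF ab(3) assms(1) ab(1,2) assms(2,3) _ i' assms(4)])
    show "max (b $ k) (q $ k) < min (a $ k) (p $ k)" if "k \<noteq> j" for k
      using ab(3,6,7) assms(1) that unfolding critical_def by auto
  qed
  moreover have "coords_less d a" "coords_less b e"
    unfolding coords_less_def using ab(4-7) by (metis max.strict_boundedE min.strict_boundedE)+
  ultimately show ?thesis
    using i' ab(1,2) assms(5,6) R_if_coords_less R_trans by meson
qed

lemma ex_critical_pair:
  obtains p q where "p \<in> D" "q \<in> D" "critical j p q"
  by (rule critical_pair_between[where l = 0 and u = 1]) auto

lemma coord_order_realized:
  assumes "no_common_coord D"
  shows "\<exists>i. R i = coord_less_on D j"
proof -
  obtain p q where pq: "p \<in> D" "q \<in> D" "critical j p q" by (rule ex_critical_pair)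
  then obtain i where i: "(p, q) \<in> R i"
    using ex_order_containing unfolding critical_def by blast
  have "R i = coord_less_on D j"
  proof (intro set_eqI iffI)
    fix z assume z: "z \<in> R i"
    obtain d e where de: "z = (d, e)" by (metis surj_pair)
    have D: "d \<in> D" "e \<in> D" using z de R_subset by auto
    have "d \<noteq> e" using z de R_irrefl by blast
    then have "d $ j \<noteq> e $ j" using assms D unfolding no_common_coord_def by blast
    moreover have "\<not> e $ j < d $ j"
    proof
      assume "e $ j < d $ j"
      then have "(e, d) \<in> R i" using critical_pair_determines_order pq i D by blast
      then show False using z de R_trans R_irrefl by blast
    qed
    ultimately show "z \<in> coord_less_on D j"
      using de D unfolding coord_less_on_def by auto
  qed (use critical_pair_determines_order pq i in \<open>auto simp: coord_less_on_def\<close>)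
  then show ?thesis by blast
qed

lemma coord_less_on_inj:
  assumes "j \<noteq> k"
  shows "coord_less_on D j \<noteq> coord_less_on D k"
proof -
  obtain p q where "p \<in> D" "q \<in> D" "critical k p q" by (rule ex_critical_pair)
  then have "(p, q) \<in> coord_less_on D k" "(p, q) \<notin> coord_less_on D j"
    using assms unfolding critical_def coord_less_on_def by auto
  then show ?thesis by blast
qed

lemma orders_are_coord_orders:
  assumes "no_common_coord D"
  obtains c :: "'n \<Rightarrow> 'n" where "surj c" "\<And>i. R i = coord_less_on D (c i)"
proof -
  obtain \<rho> where \<rho>: "\<And>j. R (\<rho> j) = coord_less_on D j"
    using coord_order_realized[OF assms] by metis
  have "inj \<rho>" by (rule injI) (metis \<rho> coord_less_on_inj)
  then have "surj \<rho>" by (simp add: finite_UNIV_inj_surj)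
  show thesis
  proof (rule that)
    show "surj (inv \<rho>)" using \<open>inj \<rho>\<close> by (rule inj_imp_surj_inv)
    show "R i = coord_less_on D (inv \<rho> i)" for i
      using \<rho>[of "inv \<rho> i"] \<open>surj \<rho>\<close> by (simp add: surj_f_inv_f)
  qed
qed

end

text \<open>The coordinate sum breaks ties in favour of the product order; the injection
  \<^const>\<open>to_nat\<close> then makes the order total.\<close>
definition coord_lex :: "'n::finite \<Rightarrow> (rat ^ 'n) rel" where
  "coord_lex j = {(x, y). x $ j < y $ j \<or> x $ j = y $ j \<and>
     ((\<Sum>k\<in>UNIV. x $ k) < (\<Sum>k\<in>UNIV. y $ k) \<or>
      (\<Sum>k\<in>UNIV. x $ k) = (\<Sum>k\<in>UNIV. y $ k) \<and> to_nat x < to_nat y)}"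

lemma irrefl_coord_lex: "(x, x) \<notin> coord_lex j"
  unfolding coord_lex_def by simp

lemma lin_order_on_coord_lex: "lin_order_on UNIV (coord_lex j)"
  unfolding lin_order_on_def strict_linear_order_on_def
proof (intro conjI)
  show "trans (coord_lex j)"
    unfolding trans_def coord_lex_def by auto
  show "irrefl (coord_lex j)"
    unfolding irrefl_def using irrefl_coord_lex by blast
  show "total_on UNIV (coord_lex j)"
    unfolding total_on_def coord_lex_def by (auto simp: not_less_iff_gr_or_eq)
qed simp

lemma coord_lex_restrict:
  assumes "no_common_coord D"
  shows "coord_lex j \<inter> (D \<times> D) = coord_less_on D j"
proof (intro set_eqI iffI)
  fix z assume z: "z \<in> coord_lex j \<inter> (D \<times> D)"
  then obtain d e where de: "z = (d, e)" "d \<in> D" "e \<in> D" by blast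
  then have "d \<noteq> e" using z irrefl_coord_lex by blast
  then have "d $ j \<noteq> e $ j" using assms de unfolding no_common_coord_def by blast
  then show "z \<in> coord_less_on D j"
    using z de unfolding coord_lex_def coord_less_on_def by auto
qed (auto simp: coord_lex_def coord_less_on_def)

lemma realizes_coord_lex:
  fixes c :: "'i \<Rightarrow> 'n::finite"
  assumes "surj c"
  shows "realizes (\<lambda>i. coord_lex (c i)) (prod_order_on UNIV)"
  unfolding realizes_def
proof (intro set_eqI iffI)
  fix z :: "(rat ^ 'n) \<times> (rat ^ 'n)" assume "z \<in> prod_order_on UNIV"
  then obtain x y where xy: "z = (x, y)" "\<forall>k. x $ k \<le> y $ k" "x \<noteq> y"
    unfolding prod_order_on_def prod_less_def by auto
  then have "\<exists>k\<in>UNIV. x $ k < y $ k" by (metis UNIV_I vec_eq_iff order_le_neq_trans)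
  then have "(\<Sum>k\<in>UNIV. x $ k) < (\<Sum>k\<in>UNIV. y $ k)" using xy by (intro sum_strict_mono_ex1) auto
  then show "z \<in> (\<Inter>i. coord_lex (c i))"
    using xy unfolding coord_lex_def by (auto simp: order_le_less)
next
  fix z assume z: "z \<in> (\<Inter>i. coord_lex (c i))"
  obtain x y where xy: "z = (x, y)" by (cases z)
  have "x $ k \<le> y $ k" for k
  proof -
    obtain i where "c i = k" using assms by (metis surjD)
    then show ?thesis using z xy unfolding coord_lex_def by (auto simp: order_le_less)
  qed
  moreover have "x \<noteq> y" using z xy irrefl_coord_lex by blast
  ultimately show "z \<in> prod_order_on UNIV"
    using xy unfolding prod_order_on_def prod_less_def by auto
qed

theorem lemma6p4:
  fixes D :: "(rat ^ 'n) set" and R :: "'n \<Rightarrow> (rat ^ 'n) rel"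
  assumes "CARD('n) \<ge> 2"
    and "dense_in_Qn D"
    and "no_common_coord D"
    and "\<forall>i. lin_order_on D (R i)"
    and "realizes R (prod_order_on D)"
  shows "\<exists>S :: 'n \<Rightarrow> (rat ^ 'n) rel.
           (\<forall>i. lin_order_on UNIV (S i) \<and> S i \<inter> (D \<times> D) = R i)
           \<and> realizes S (prod_order_on UNIV)"
proof -
  interpret dense_realizer D R using assms(2,4,5) by unfold_locales
  obtain c where "surj c" and R_coord: "\<And>i. R i = coord_less_on D (c i)"
    using orders_are_coord_orders[OF assms(3)] by blast
  show ?thesis
  proof (intro exI conjI allI)
    show "lin_order_on UNIV (coord_lex (c i))" for i
      by (rule lin_order_on_coord_lex)
    show "coord_lex (c i) \<inter> (D \<times> D) = R i" for i
      using coord_lex_restrict[OF assms(3)] R_coord by simp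
    show "realizes (\<lambda>i. coord_lex (c i)) (prod_order_on UNIV)"
      using \<open>surj c\<close> by (rule realizes_coord_lex)
  qed
qed

end
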